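(* Let $n\ge 1$ and let $G=(N,\{\Sigma_i\mid i\in N\},S,o)$ be a game form. Then its $Ł_n$-valued effectivity function $E_G$ is a truly playable $Ł_n$-valued effectivity function.
   Context: For a positive integer $n$ let $Ł_n=\{0,\frac1n,\dots,\frac{n-1}{n},1\}$ with the Łukasiewicz operations $\neg x=1-x$, $x\oplus y=\min(x+y,1)$, $x\odot y=\max(x+y-1,0)$, $x\wedge y=\min(x,y)$, $x\vee y=\max(x,y)$. For a set $S$, the operations are applied to functions in $Ł_n^S$ pointwise; $0,1$ also denote constant functions; $\chi_Y$ is the characteristic function of $Y\subseteq S$. Standing assumptions: $N$ is a finite set of players, $S$ a set of outcome states, $|N|\ge2$, $|S|\ge 2$. Subsets $C\subseteq N$ are coalitions, $\overline C=N\setminus C$. A game form is $G=(N,\{\Sigma_i\mid i\in N\},S,o)$ with nonempty strategy sets $\Sigma_i$ and outcome map $o:\prod_{i\in N}\Sigma_i\to S$; for $\sigma_C\in\prod_{i\in C}\Sigma_i$, $\sigma_{\overline C}\in\prod_{i\in\overline C}\Sigma_i$, $\sigma_C\sigma_{\overline C}$ is the combined profile. The $Ł_n$-valued effectivity function of $G$ is $E_G(C,f)=\max_{\sigma_C}\min_{\sigma_{\overline C}} f(o(\sigma_C\sigma_{\overline C}))$ for $C\subseteq N$, $f\in Ł_n^S$. An $Ł_n$-valued effectivity function is any map $E:\mathcal P N\times Ł_n^S\to Ł_n$. It is: outcome monotonic if $f\ge g$ implies $E(C,f)\ge E(C,g)$ for all $C$; $N$-maximal if $\neg E(\varnothing,\neg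 f)\le E(N,f)$ for all $f$; superadditive if $E(C_1,f)\wedge E(C_2,g)\le E(C_1\cup C_2,f\wedge g)$ whenever $C_1\cap C_2=\varnothing$; homogeneous if $E(C,f\oplus f)=E(C,f)\oplus E(C,f)$ and $E(C,f\odot f)=E(C,f)\odot E(C,f)$ for all $C,f$; has liveness if $E(C,1)=1$ for all $C$; has safety if $E(C,0)=0$ for all $C$; principal if there is $g\in Ł_n^S$ with $\{f\mid E(\varnothing,f)=1\}=\{f\mid f\ge g\odot\cdots\odot g\ (n\text{ factors})\}$. $E$ is playable if it is outcome monotonic, $N$-maximal, superadditive, homogeneous and has liveness and safety; truly playable if playable and principal. *)

theory Defs
  imports "HOL-Library.FuncSet" Complex_Main
begin

definition Luk :: "nat \<Rightarrow> real set" where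
  "Luk n = {real k / real n | k. k \<le> n}"

definition lneg :: "real \<Rightarrow> real" where "lneg x = 1 - x"
definition loplus :: "real \<Rightarrow> real \<Rightarrow> real" where "loplus x y = min (x + y) 1"
definition lodot :: "real \<Rightarrow> real \<Rightarrow> real" where "lodot x y = max (x + y - 1) 0"

fun lodot_pow :: "nat \<Rightarrow> real \<Rightarrow> real" where
  "lodot_pow 0 x = 1"
| "lodot_pow (Suc k) x = lodot x (lodot_pow k x)"

definition game_form :: "'i set \<Rightarrow> ('i \<Rightarrow> 'a set) \<Rightarrow> 's set \<Rightarrow> (('i \<Rightarrow> 'a) \<Rightarrow> 's) \<Rightarrow> bool" where
  "game_form N Str S out \<longleftrightarrow>
     finite N \<and> 2 \<le> card N \<and> (\<exists>a b. a \<in> S \<and> b \<in> S \<and> a \<noteq> b) \<and>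
     (\<forall>i\<in>N. Str i \<noteq> {}) \<and> out \<in> (PiE N Str) \<rightarrow> S"

definition combine :: "'i set \<Rightarrow> ('i \<Rightarrow> 'a) \<Rightarrow> ('i \<Rightarrow> 'a) \<Rightarrow> ('i \<Rightarrow> 'a)" where
  "combine C sC sD = (\<lambda>i. if i \<in> C then sC i else sD i)"

definition effG :: "'i set \<Rightarrow> ('i \<Rightarrow> 'a set) \<Rightarrow> (('i \<Rightarrow> 'a) \<Rightarrow> 's) \<Rightarrow> 'i set \<Rightarrow> ('s \<Rightarrow> real) \<Rightarrow> real" where
  "effG N Str out C f =
     Max ((\<lambda>sC. Min ((\<lambda>sD. f (out (combine C sC sD))) ` PiE (N - C) Str)) ` PiE C Str)"

definition eff_fun :: "nat \<Rightarrow> 'i set \<Rightarrow> 's set \<Rightarrow> ('i set \<Rightarrow> ('s \<Rightarrow> real) \<Rightarrow> real) \<Rightarrow> bool" where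
  "eff_fun n N S E \<longleftrightarrow> (\<forall>C. C \<subseteq> N \<longrightarrow> (\<forall>f \<in> S \<rightarrow> Luk n. E C f \<in> Luk n))"

definition outcome_monotonic :: "nat \<Rightarrow> 'i set \<Rightarrow> 's set \<Rightarrow> ('i set \<Rightarrow> ('s \<Rightarrow> real) \<Rightarrow> real) \<Rightarrow> bool" where
  "outcome_monotonic n N S E \<longleftrightarrow>
     (\<forall>C. C \<subseteq> N \<longrightarrow> (\<forall>f \<in> S \<rightarrow> Luk n. \<forall>g \<in> S \<rightarrow> Luk n.
        (\<forall>s\<in>S. g s \<le> f s) \<longrightarrow> E C g \<le> E C f))"

definition N_maximal :: "nat \<Rightarrow> 'i set \<Rightarrow> 's set \<Rightarrow> ('i set \<Rightarrow> ('s \<Rightarrow> real) \<Rightarrow> real) \<Rightarrow> bool" where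
  "N_maximal n N S E \<longleftrightarrow>
     (\<forall>f \<in> S \<rightarrow> Luk n. lneg (E {} (\<lambda>s. lneg (f s))) \<le> E N f)"

definition superadditive :: "nat \<Rightarrow> 'i set \<Rightarrow> 's set \<Rightarrow> ('i set \<Rightarrow> ('s \<Rightarrow> real) \<Rightarrow> real) \<Rightarrow> bool" where
  "superadditive n N S E \<longleftrightarrow>
     (\<forall>C1 C2. C1 \<subseteq> N \<longrightarrow> C2 \<subseteq> N \<longrightarrow> C1 \<inter> C2 = {} \<longrightarrow>
       (\<forall>f \<in> S \<rightarrow> Luk n. \<forall>g \<in> S \<rightarrow> Luk n.
          min (E C1 f) (E C2 g) \<le> E (C1 \<union> C2) (\<lambda>s. min (f s) (g s))))"

definition homogeneous :: "nat \<Rightarrow> 'i set \<Rightarrow> 's set \<Rightarrow> ('i set \<Rightarrow> ('s \<Rightarrow> real) \<Rightarrow> real) \<Rightarrow> bool" where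
  "homogeneous n N S E \<longleftrightarrow>
     (\<forall>C. C \<subseteq> N \<longrightarrow> (\<forall>f \<in> S \<rightarrow> Luk n.
        E C (\<lambda>s. loplus (f s) (f s)) = loplus (E C f) (E C f) \<and>
        E C (\<lambda>s. lodot (f s) (f s)) = lodot (E C f) (E C f)))"

definition liveness :: "'i set \<Rightarrow> ('i set \<Rightarrow> ('s \<Rightarrow> real) \<Rightarrow> real) \<Rightarrow> bool" where
  "liveness N E \<longleftrightarrow> (\<forall>C. C \<subseteq> N \<longrightarrow> E C (\<lambda>_. 1) = 1)"

definition safety :: "'i set \<Rightarrow> ('i set \<Rightarrow> ('s \<Rightarrow> real) \<Rightarrow> real) \<Rightarrow> bool" where
  "safety N E \<longleftrightarrow> (\<forall>C. C \<subseteq> N \<longrightarrow> E C (\<lambda>_. 0) = 0)"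

definition principal :: "nat \<Rightarrow> 's set \<Rightarrow> ('i set \<Rightarrow> ('s \<Rightarrow> real) \<Rightarrow> real) \<Rightarrow> bool" where
  "principal n S E \<longleftrightarrow>
     (\<exists>g \<in> S \<rightarrow> Luk n. \<forall>f \<in> S \<rightarrow> Luk n.
        E {} f = 1 \<longleftrightarrow> (\<forall>s\<in>S. lodot_pow n (g s) \<le> f s))"

definition playable :: "nat \<Rightarrow> 'i set \<Rightarrow> 's set \<Rightarrow> ('i set \<Rightarrow> ('s \<Rightarrow> real) \<Rightarrow> real) \<Rightarrow> bool" where
  "playable n N S E \<longleftrightarrow> eff_fun n N S E \<and> outcome_monotonic n N S E \<and> N_maximal n N S E \<and>
     superadditive n N S E \<and> homogeneous n N S E \<and> liveness N E \<and> safety N E"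

definition truly_playable :: "nat \<Rightarrow> 'i set \<Rightarrow> 's set \<Rightarrow> ('i set \<Rightarrow> ('s \<Rightarrow> real) \<Rightarrow> real) \<Rightarrow> bool" where
  "truly_playable n N S E \<longleftrightarrow> playable n N S E \<and> principal n S E"

end

theory Submission
  imports Defs
begin

text \<open>The value of a coalition is a max-min of finitely many truth values of \<open>f\<close> and is
  attained at some outcome. Hence it lies in \<open>L\<^sub>n\<close>, constants are reproduced, and every monotone
  operation such as \<open>x \<mapsto> x \<oplus> x\<close> or \<open>x \<mapsto> x \<odot> x\<close> commutes with both \<open>max\<close> and \<open>min\<close>, which gives
  homogeneity. Superadditivity comes from letting two disjoint coalitions play their strategies
  jointly, \<open>N\<close>-maximality from the fact that the empty and the grand coalition both just range
  over full strategy profiles, and principality is witnessed by the characteristic function of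
  the set of reachable outcomes.\<close>

lemma Luk_eq: "Luk n = (\<lambda>k. real k / real n) ` {..n}"
  unfolding Luk_def by auto

lemma finite_Luk: "finite (Luk n)"
  unfolding Luk_eq by simp

lemma Luk_bounds: "1 \<le> n \<Longrightarrow> x \<in> Luk n \<Longrightarrow> 0 \<le> x \<and> x \<le> 1"
  unfolding Luk_def by auto

lemma zero_in_Luk: "0 \<in> Luk n"
  unfolding Luk_def by force

lemma one_in_Luk: "1 \<le> n \<Longrightarrow> 1 \<in> Luk n"
  unfolding Luk_def by (rule CollectI, rule exI[of _ n]) auto

lemma lodot_pow_one: "lodot_pow k 1 = 1"
  by (induction k) (auto simp: lodot_def)

lemma lodot_pow_zero: "1 \<le> k \<Longrightarrow> lodot_pow k 0 = 0"
proof -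
  have "lodot_pow k 0 \<le> 1" for k
    by (induction k) (auto simp: lodot_def)
  then show "1 \<le> k \<Longrightarrow> lodot_pow k 0 = 0"
    by (cases k) (auto simp: lodot_def)
qed

definition maxmin :: "'a set \<Rightarrow> 'b set \<Rightarrow> ('a \<Rightarrow> 'b \<Rightarrow> 'c::linorder) \<Rightarrow> 'c" where
  "maxmin A B F = Max ((\<lambda>a. Min (F a ` B)) ` A)"

locale finite_valued_maxmin =
  fixes A :: "'a set" and B :: "'b set" and F :: "'a \<Rightarrow> 'b \<Rightarrow> 'c::linorder" and V :: "'c set"
  assumes A_ne: "A \<noteq> {}" and B_ne: "B \<noteq> {}" and finite_V: "finite V"
    and F_in_V: "\<And>a b. a \<in> A \<Longrightarrow> b \<in> B \<Longrightarrow> F a b \<in> V"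
begin

lemma finite_row: "finite (F a ` B)" if "a \<in> A"
  using F_in_V[OF that] by (blast intro: finite_subset[OF _ finite_V])

lemma Min_row_attained: "\<exists>b\<in>B. Min (F a ` B) = F a b" if "a \<in> A"
  using Min_in[OF finite_row[OF that]] B_ne by auto

lemma finite_row_minima: "finite ((\<lambda>a. Min (F a ` B)) ` A)"
proof (rule finite_subset[OF _ finite_V])
  show "(\<lambda>a. Min (F a ` B)) ` A \<subseteq> V"
    using Min_row_attained F_in_V by fastforce
qed

lemma maxmin_attained: "\<exists>a\<in>A. \<exists>b\<in>B. maxmin A B F = F a b"
proof -
  obtain a where "a \<in> A" "maxmin A B F = Min (F a ` B)"
    using Max_in[OF finite_row_minima] A_ne unfolding maxmin_def by auto
  then show ?thesis using Min_row_attained by metis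
qed

lemma maxmin_in: "maxmin A B F \<in> V"
  using maxmin_attained F_in_V by metis

lemma ge_maxmin_iff: "v \<le> maxmin A B F \<longleftrightarrow> (\<exists>a\<in>A. \<forall>b\<in>B. v \<le> F a b)"
proof -
  have "v \<le> maxmin A B F \<longleftrightarrow> (\<exists>a\<in>A. v \<le> Min (F a ` B))"
    unfolding maxmin_def using Max_ge_iff[OF finite_row_minima] A_ne by auto
  also have "\<dots> \<longleftrightarrow> (\<exists>a\<in>A. \<forall>b\<in>B. v \<le> F a b)"
    using Min_ge_iff[OF finite_row] B_ne by auto
  finally show ?thesis .
qed

lemma mono_maxmin_commute: "mono h \<Longrightarrow> maxmin A B (\<lambda>a b. h (F a b)) = h (maxmin A B F)"
  unfolding maxmin_def
  by (simp add: mono_Max_commute[OF _ finite_row_minima] A_ne B_ne mono_Min_commute[OF _ finite_row]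
      image_image cong: image_cong)

end

context
  fixes N :: "'i set" and Str :: "'i \<Rightarrow> 'a set" and S :: "'s set" and out :: "('i \<Rightarrow> 'a) \<Rightarrow> 's"
  assumes Str_nonempty: "\<forall>i\<in>N. Str i \<noteq> {}" and out_funcset: "out \<in> PiE N Str \<rightarrow> S"
begin

lemma PiE_nonempty: "C \<subseteq> N \<Longrightarrow> PiE C Str \<noteq> {}"
  using Str_nonempty by (auto simp: PiE_eq_empty_iff)

lemma combine_in_PiE:
  "sC \<in> PiE C Str \<Longrightarrow> sD \<in> PiE (N - C) Str \<Longrightarrow> C \<subseteq> N \<Longrightarrow> combine C sC sD \<in> PiE N Str"
  by (auto simp: combine_def PiE_def Pi_def extensional_def)

lemma effG_eq_maxmin:
  "effG N Str out C f = maxmin (PiE C Str) (PiE (N - C) Str) (\<lambda>sC sD. f (out (combine C sC sD)))"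
  unfolding effG_def maxmin_def ..

context
  fixes C :: "'i set" and f :: "'s \<Rightarrow> real" and V :: "real set"
  assumes C: "C \<subseteq> N" and finite_V: "finite V" and f_funcset: "f \<in> S \<rightarrow> V"
begin

lemma effG_finite_valued_maxmin:
  "finite_valued_maxmin (PiE C Str) (PiE (N - C) Str) (\<lambda>sC sD. f (out (combine C sC sD))) V"
proof
  show "PiE C Str \<noteq> {}" "PiE (N - C) Str \<noteq> {}"
    using PiE_nonempty C by auto
  show "f (out (combine C sC sD)) \<in> V" if "sC \<in> PiE C Str" "sD \<in> PiE (N - C) Str" for sC sD
    using f_funcset out_funcset combine_in_PiE[OF that C] by blast
qed (fact finite_V)

lemma effG_attained: "\<exists>\<sigma>\<in>PiE N Str. effG N Str out C f = f (out \<sigma>)"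
proof -
  obtain sC sD where sC: "sC \<in> PiE C Str" and sD: "sD \<in> PiE (N - C) Str"
    and attained: "effG N Str out C f = f (out (combine C sC sD))"
    using finite_valued_maxmin.maxmin_attained[OF effG_finite_valued_maxmin]
    unfolding effG_eq_maxmin by blast
  show ?thesis using combine_in_PiE[OF sC sD C] attained by blast
qed

lemma effG_in: "effG N Str out C f \<in> V"
  unfolding effG_eq_maxmin by (rule finite_valued_maxmin.maxmin_in[OF effG_finite_valued_maxmin])

lemma ge_effG_iff:
  "v \<le> effG N Str out C f \<longleftrightarrow> (\<exists>sC\<in>PiE C Str. \<forall>sD\<in>PiE (N - C) Str. v \<le> f (out (combine C sC sD)))"
  unfolding effG_eq_maxmin by (rule finite_valued_maxmin.ge_maxmin_iff[OF effG_finite_valued_maxmin])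

lemma effG_mono_commute: "mono h \<Longrightarrow> effG N Str out C (\<lambda>s. h (f s)) = h (effG N Str out C f)"
  unfolding effG_eq_maxmin by (rule finite_valued_maxmin.mono_maxmin_commute[OF effG_finite_valued_maxmin])

end

lemma combine_empty_coalition: "combine {} sC sD = sD"
  by (simp add: combine_def)

lemma combine_grand_coalition: "\<sigma> \<in> PiE N Str \<Longrightarrow> combine N \<sigma> (\<lambda>_. undefined) = \<sigma>"
  by (auto simp: combine_def fun_eq_iff PiE_def extensional_def)

lemma effG_const: "C \<subseteq> N \<Longrightarrow> effG N Str out C (\<lambda>_. c) = c"
  using effG_in[where f = "\<lambda>_. c" and V = "{c}"] by simp

lemma effG_eff_fun: "eff_fun n N S (effG N Str out)"
  unfolding eff_fun_def using effG_in[OF _ finite_Luk] by blast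

lemma effG_outcome_monotonic: "outcome_monotonic n N S (effG N Str out)"
  unfolding outcome_monotonic_def
proof (intro allI impI ballI)
  fix C f g assume C: "C \<subseteq> N" and f: "f \<in> S \<rightarrow> Luk n" and g: "g \<in> S \<rightarrow> Luk n"
    and g_le_f: "\<forall>s\<in>S. g s \<le> f s"
  obtain sC where sC: "sC \<in> PiE C Str"
    and guarantee: "\<forall>sD\<in>PiE (N - C) Str. effG N Str out C g \<le> g (out (combine C sC sD))"
    using ge_effG_iff[OF C finite_Luk g, of "effG N Str out C g"] by blast
  have "effG N Str out C g \<le> f (out (combine C sC sD))" if sD: "sD \<in> PiE (N - C) Str" for sD
  proof -
    have "out (combine C sC sD) \<in> S"
      using out_funcset combine_in_PiE[OF sC sD C] by blast
    then show ?thesis using guarantee g_le_f sD by (meson order_trans)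
  qed
  then show "effG N Str out C g \<le> effG N Str out C f"
    using ge_effG_iff[OF C finite_Luk f] sC by blast
qed

lemma effG_N_maximal: "N_maximal n N S (effG N Str out)"
  unfolding N_maximal_def
proof
  fix f assume f: "f \<in> S \<rightarrow> Luk n"
  have neg_f: "(\<lambda>s. lneg (f s)) \<in> S \<rightarrow> lneg ` Luk n"
    using f by blast
  obtain \<sigma> where \<sigma>: "\<sigma> \<in> PiE N Str"
    and attained: "effG N Str out {} (\<lambda>s. lneg (f s)) = lneg (f (out \<sigma>))"
    using effG_attained[OF empty_subsetI finite_imageI[OF finite_Luk] neg_f] by blast
  have "f (out \<sigma>) \<le> effG N Str out N f"
    using ge_effG_iff[OF order_refl finite_Luk f] \<sigma> by (auto simp: combine_grand_coalition)
  then show "lneg (effG N Str out {} (\<lambda>s. lneg (f s))) \<le> effG N Str out N f"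
    using attained by (simp add: lneg_def)
qed

lemma effG_superadditive: "superadditive n N S (effG N Str out)"
  unfolding superadditive_def
proof (intro allI impI ballI)
  fix C1 C2 f g assume C1: "C1 \<subseteq> N" and C2: "C2 \<subseteq> N" and disjoint: "C1 \<inter> C2 = {}"
    and f: "f \<in> S \<rightarrow> Luk n" and g: "g \<in> S \<rightarrow> Luk n"
  define v where "v = min (effG N Str out C1 f) (effG N Str out C2 g)"
  obtain s1 where s1: "s1 \<in> PiE C1 Str"
    and guarantee1: "\<forall>sD\<in>PiE (N - C1) Str. v \<le> f (out (combine C1 s1 sD))"
    using ge_effG_iff[OF C1 finite_Luk f, of v] unfolding v_def by auto
  obtain s2 where s2: "s2 \<in> PiE C2 Str"
    and guarantee2: "\<forall>sD\<in>PiE (N - C2) Str. v \<le> g (out (combine C2 s2 sD))"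
    using ge_effG_iff[OF C2 finite_Luk g, of v] unfolding v_def by auto
  have "v \<le> min (f (out (combine (C1 \<union> C2) (combine C1 s1 s2) sD)))
                 (g (out (combine (C1 \<union> C2) (combine C1 s1 s2) sD)))"
    if sD: "sD \<in> PiE (N - (C1 \<union> C2)) Str" for sD
  proof -
    \<comment> \<open>Seen from either coalition, the joint play is its own strategy against a response of the rest.\<close>
    have joint1: "combine (C1 \<union> C2) (combine C1 s1 s2) sD = combine C1 s1 (combine C2 s2 sD)"
      and joint2: "combine (C1 \<union> C2) (combine C1 s1 s2) sD = combine C2 s2 (combine C1 s1 sD)"
      using disjoint by (auto simp: combine_def fun_eq_iff)
    have "combine C2 s2 sD \<in> PiE (N - C1) Str" "combine C1 s1 sD \<in> PiE (N - C2) Str"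
      using s1 s2 sD disjoint C1 C2 by (auto simp: combine_def PiE_def Pi_def extensional_def)
    then have "v \<le> f (out (combine C1 s1 (combine C2 s2 sD)))"
      and "v \<le> g (out (combine C2 s2 (combine C1 s1 sD)))"
      using guarantee1 guarantee2 by blast+
    then show ?thesis by (simp add: joint1 [symmetric] joint2 [symmetric])
  qed
  moreover have "combine C1 s1 s2 \<in> PiE (C1 \<union> C2) Str"
    using s1 s2 by (auto simp: combine_def PiE_def Pi_def extensional_def)
  moreover have "(\<lambda>s. min (f s) (g s)) \<in> S \<rightarrow> Luk n"
    using f g by (auto simp: min_def)
  ultimately show "min (effG N Str out C1 f) (effG N Str out C2 g)
      \<le> effG N Str out (C1 \<union> C2) (\<lambda>s. min (f s) (g s))"
    using ge_effG_iff[of "C1 \<union> C2" "Luk n"] C1 C2 finite_Luk unfolding v_def by blast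
qed

lemma effG_homogeneous: "homogeneous n N S (effG N Str out)"
  unfolding homogeneous_def
proof (intro allI impI ballI conjI)
  fix C f assume C: "C \<subseteq> N" and f: "f \<in> S \<rightarrow> Luk n"
  show "effG N Str out C (\<lambda>s. loplus (f s) (f s)) = loplus (effG N Str out C f) (effG N Str out C f)"
    by (rule effG_mono_commute[OF C finite_Luk f]) (auto simp: mono_def loplus_def)
  show "effG N Str out C (\<lambda>s. lodot (f s) (f s)) = lodot (effG N Str out C f) (effG N Str out C f)"
    by (rule effG_mono_commute[OF C finite_Luk f]) (auto simp: mono_def lodot_def)
qed

lemma effG_liveness: "liveness N (effG N Str out)"
  unfolding liveness_def by (simp add: effG_const)

lemma effG_safety: "safety N (effG N Str out)"
  unfolding safety_def by (simp add: effG_const)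

lemma effG_empty_coalition_eq_one_iff:
  assumes n: "1 \<le> n" and f: "f \<in> S \<rightarrow> Luk n"
  shows "effG N Str out {} f = 1 \<longleftrightarrow> (\<forall>\<sigma>\<in>PiE N Str. f (out \<sigma>) = 1)"
proof -
  have payoff_le_1: "f (out \<sigma>) \<le> 1" if "\<sigma> \<in> PiE N Str" for \<sigma>
    using f out_funcset that Luk_bounds[OF n] by blast
  have "effG N Str out {} f \<le> 1"
    using effG_in[OF empty_subsetI finite_Luk f] Luk_bounds[OF n] by blast
  then have "effG N Str out {} f = 1 \<longleftrightarrow> 1 \<le> effG N Str out {} f"
    by linarith
  also have "\<dots> \<longleftrightarrow> (\<forall>\<sigma>\<in>PiE N Str. 1 \<le> f (out \<sigma>))"
    unfolding ge_effG_iff[OF empty_subsetI finite_Luk f] by (simp add: combine_empty_coalition)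
  also have "\<dots> \<longleftrightarrow> (\<forall>\<sigma>\<in>PiE N Str. f (out \<sigma>) = 1)"
    using payoff_le_1 by fastforce
  finally show ?thesis .
qed

lemma effG_principal:
  assumes n: "1 \<le> n"
  shows "principal n S (effG N Str out)"
  unfolding principal_def
proof
  define g :: "'s \<Rightarrow> real" where "g s = (if s \<in> out ` PiE N Str then 1 else 0)" for s
  show "g \<in> S \<rightarrow> Luk n"
    using zero_in_Luk one_in_Luk[OF n] by (auto simp: g_def)
  have lodot_pow_g: "lodot_pow n (g s) = g s" for s
    by (simp add: g_def lodot_pow_one lodot_pow_zero[OF n])
  show "\<forall>f\<in>S \<rightarrow> Luk n. effG N Str out {} f = 1 \<longleftrightarrow> (\<forall>s\<in>S. lodot_pow n (g s) \<le> f s)"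
  proof
    fix f assume f: "f \<in> S \<rightarrow> Luk n"
    have bounds: "0 \<le> f s \<and> f s \<le> 1" if "s \<in> S" for s
      using f that Luk_bounds[OF n] by blast
    have "(\<forall>s\<in>S. g s \<le> f s) \<longleftrightarrow> (\<forall>\<sigma>\<in>PiE N Str. f (out \<sigma>) = 1)"
    proof
      assume g_le_f: "\<forall>s\<in>S. g s \<le> f s"
      show "\<forall>\<sigma>\<in>PiE N Str. f (out \<sigma>) = 1"
      proof
        fix \<sigma> assume \<sigma>: "\<sigma> \<in> PiE N Str"
        then have "out \<sigma> \<in> S" "g (out \<sigma>) = 1"
          using out_funcset by (auto simp: g_def)
        then show "f (out \<sigma>) = 1"
          using g_le_f bounds by (metis order_antisym)
      qed
    next
      assume "\<forall>\<sigma>\<in>PiE N Str. f (out \<sigma>) = 1"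
      then have "f s = 1" if "s \<in> out ` PiE N Str" for s
        using that by blast
      then show "\<forall>s\<in>S. g s \<le> f s"
        using bounds unfolding g_def by simp
    qed
    then show "effG N Str out {} f = 1 \<longleftrightarrow> (\<forall>s\<in>S. lodot_pow n (g s) \<le> f s)"
      by (simp add: lodot_pow_g effG_empty_coalition_eq_one_iff[OF n f])
  qed
qed

end

theorem mainTheorem1:
  fixes n :: nat and N :: "'i set" and Str :: "'i \<Rightarrow> 'a set"
    and S :: "'s set" and out :: "('i \<Rightarrow> 'a) \<Rightarrow> 's"
  assumes "1 \<le> n" and "game_form N Str S out"
  shows "truly_playable n N S (effG N Str out)"
proof -
  have game: "\<forall>i\<in>N. Str i \<noteq> {}" "out \<in> PiE N Str \<rightarrow> S"
    using \<open>game_form N Str S out\<close> unfolding game_form_def by blast+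
  show ?thesis
    unfolding truly_playable_def playable_def
    by (simp add: effG_eff_fun[OF game] effG_outcome_monotonic[OF game] effG_N_maximal[OF game]
        effG_superadditive[OF game] effG_homogeneous[OF game] effG_liveness[OF game]
        effG_safety[OF game] effG_principal[OF game \<open>1 \<le> n\<close>])
qed

end
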